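(* Let $f:\mathbb{R}^n\to\mathbb{R}$ be convex, let $\nu\in\mathbb{N}$ and $k\in\{1,\ldots,\nu\}$. Write states as $x=(x^1,\ldots,x^\nu)$ with $x^j\in\mathbb{R}^n$. (i) Consider the system with state set $X=(\mathbb{R}^n)^\nu$ and input $u_t\in\mathbb{R}^n$, $$x_{t+1}=(x_t^2,\ldots,x_t^\nu,u_t),\qquad y_t=u_t-x_t^k ,$$ (equivalently $x_{t+1}=A_\psi x_t+B_\psi u_t$, $y_t=C_\psi x_t+u_t$ with $A_\psi=A_\nu\otimes I_n$, $B_\psi=e_\nu\otimes I_n$, $C_\psi=(-e_k^\top)\otimes I_n$, where $A_\nu\in\mathbb{R}^{\nu\times\nu}$ is the upper Jordan block with eigenvalue zero). This system is dissipative with respect to the multi-valued supply rate $S(u,y)=\partial f(u)^\top y$ with storage function $V_k(x)=\sum_{j=k}^\nu f(x^j)$; that is, for every trajectory, all $t_1\le t_2$ in $\mathbb{N}_0$ and all $g_t\in\partial f(u_t)$, $V_k(x_{t_2})\le V_k(x_{t_1})+\sum_{t=t_1}^{t_2-1}g_t^\top y_t$. (ii) Let $X_{\partial f}:=\{z\in\mathbb{R}^n: z\in\partial f(u)\text{ for some }u\in\mathbb{R}^n\}$ and $X^*:=(X_{\partial f})^\nu$. Consider the system with state set $X^*$ and input $u_t\in\mathbb{R}^n$, $$x_{t+1}=(x_t^2,\ldots,x_t^\nu,v_t),\qquad y_t=v_t-x_t^k,\qquad v_t\in\partial f(u_t).$$ This system is passive (dissipative with respect to $S(u,y)=u^\top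 y$) on $X^*$ with storage function $V_k^*(x)=\sum_{j=k}^\nu f^*(x^j)$; that is, for all such trajectories with $x_t\in X^*$ and all $t_1\le t_2$ in $\mathbb{N}_0$, $V_k^*(x_{t_2})\le V_k^*(x_{t_1})+\sum_{t=t_1}^{t_2-1}u_t^\top y_t$.
   Context: $\partial f$ is the subdifferential of $f$; $f^*(x)=\sup_{w\in\mathbb{R}^n}[x^\top w-f(w)]$ is the Fenchel conjugate, finite on $X_{\partial f}$. $e_j$ denotes the $j$-th standard unit vector of $\mathbb{R}^\nu$, $\otimes$ the Kronecker product, $I_n$ the $n\times n$ identity matrix. *)

theory Defs
  imports "HOL-Analysis.Analysis"
begin

definition subdiff :: "('a::real_inner \<Rightarrow> real) \<Rightarrow> 'a \<Rightarrow> 'a set" where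
  "subdiff f u = {g. \<forall>w. f w \<ge> f u + inner g (w - u)}"

definition subdiff_range :: "('a::real_inner \<Rightarrow> real) \<Rightarrow> 'a set" where
  "subdiff_range f = {z. \<exists>u. z \<in> subdiff f u}"

text \<open>Fenchel conjugate (meaningful/finite on subdiff_range f).\<close>
definition fconj :: "('a::real_inner \<Rightarrow> real) \<Rightarrow> 'a \<Rightarrow> real" where
  "fconj f x = (SUP w. inner x w - f w)"

end

theory Submission
  imports Defs
begin

(* Both storage functions only see the shift register drop its k-th slot and receive a new
   entry, so each time step changes V by h(new) - h(x^k).  For V_k this is f(u) - f(x^k),
   bounded by the subgradient inequality; for V_k^* it is f^*(v) - f^*(x^k), bounded by the
   Fenchel-Young equality at v and the Fenchel-Young inequality at x^k. *)

lemma telescoping_upper_bound: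
  fixes V s :: "nat \<Rightarrow> real"
  assumes "t1 \<le> t2"
    and step: "\<And>t. t1 \<le> t \<Longrightarrow> t < t2 \<Longrightarrow> V (Suc t) \<le> V t + s t"
  shows "V t2 \<le> V t1 + (\<Sum>t=t1..<t2. s t)"
  using assms(1)
proof (induction t2 rule: dec_induct)
  case base
  then show ?case by simp
next
  case (step m)
  then have "V (Suc m) \<le> V t1 + (\<Sum>t=t1..<m. s t) + s m"
    using assms(2)[of m] by simp
  then show ?case
    using step.hyps(1) by simp
qed

lemma shift_register_sum:
  fixes h :: "'a \<Rightarrow> real"
  assumes "k \<le> \<nu>" and shift: "\<And>j. k \<le> j \<Longrightarrow> j < \<nu> \<Longrightarrow> y j = z (Suc j)"
  shows "(\<Sum>j=k..\<nu>. h (y j)) + h (z k) = (\<Sum>j=k..\<nu>. h (z j)) + h (y \<nu>)"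
proof -
  have "(\<Sum>j=k..\<nu>. h (y j)) = (\<Sum>j=k..<\<nu>. h (z (Suc j))) + h (y \<nu>)"
    using assms by (simp add: sum.last_plus)
  also have "(\<Sum>j=k..<\<nu>. h (z (Suc j))) = (\<Sum>j=Suc k..\<nu>. h (z j))"
    using sum.shift_bounds_Suc_ivl[of "h \<circ> z" k \<nu>] by (simp add: atLeastLessThanSuc_atLeastAtMost)
  also have "\<dots> = (\<Sum>j=k..\<nu>. h (z j)) - h (z k)"
    using assms(1) by (simp add: sum.atLeast_Suc_atMost)
  finally show ?thesis by simp
qed

lemma shift_register_storage_step:
  fixes h :: "'a \<Rightarrow> real"
  assumes "k \<le> \<nu>" "\<And>j. k \<le> j \<Longrightarrow> j < \<nu> \<Longrightarrow> y j = z (Suc j)"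
    and "h (y \<nu>) \<le> h (z k) + s"
  shows "(\<Sum>j=k..\<nu>. h (y j)) \<le> (\<Sum>j=k..\<nu>. h (z j)) + s"
  using shift_register_sum[of k \<nu> y z h] assms by simp

lemma subgradient_inequality:
  assumes "g \<in> subdiff f u"
  shows "f u + inner g (w - u) \<le> f w"
  using assms unfolding subdiff_def by blast

lemma subdiff_storage_step:
  assumes "g \<in> subdiff f u"
  shows "f u \<le> f z + inner g (u - z)"
  using subgradient_inequality[OF assms, of z] by (simp add: inner_diff_right)

lemma fconj_subdiff_eq:
  assumes "g \<in> subdiff f u"
  shows "fconj f g = inner g u - f u"
  unfolding fconj_def
proof (rule cSup_eq_maximum)
  fix r
  assume "r \<in> range (\<lambda>w. inner g w - f w)"
  then obtain w where "r = inner g w - f w" by blast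
  then show "r \<le> inner g u - f u"
    using subgradient_inequality[OF assms, of w] by (simp add: inner_diff_right)
qed simp

lemma fenchel_young:
  assumes "z \<in> subdiff_range f"
  shows "inner z w - f w \<le> fconj f z"
proof -
  obtain u where u: "z \<in> subdiff f u"
    using assms unfolding subdiff_range_def by blast
  show ?thesis
    using subgradient_inequality[OF u, of w] fconj_subdiff_eq[OF u] by (simp add: inner_diff_right)
qed

lemma fconj_storage_step:
  assumes "v \<in> subdiff f u" and "z \<in> subdiff_range f"
  shows "fconj f v \<le> fconj f z + inner u (v - z)"
  using fconj_subdiff_eq[OF assms(1)] fenchel_young[OF assms(2), of u]
  by (simp add: inner_diff_right inner_commute)

theorem corollary6:
  fixes f :: "real^'n \<Rightarrow> real" and \<nu> k :: nat
  assumes cvx: "convex_on UNIV f"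
    and k: "1 \<le> k" "k \<le> \<nu>"
  shows
   "(\<forall>(x :: nat \<Rightarrow> nat \<Rightarrow> real^'n) (u :: nat \<Rightarrow> real^'n).
       (\<forall>t. (\<forall>j. 1 \<le> j \<and> j < \<nu> \<longrightarrow> x (Suc t) j = x t (Suc j)) \<and> x (Suc t) \<nu> = u t) \<longrightarrow>
       (\<forall>t1 t2 (g :: nat \<Rightarrow> real^'n). t1 \<le> t2 \<and> (\<forall>t\<in>{t1..<t2}. g t \<in> subdiff f (u t)) \<longrightarrow>
          (\<Sum>j=k..\<nu>. f (x t2 j)) \<le> (\<Sum>j=k..\<nu>. f (x t1 j)) + (\<Sum>t=t1..<t2. inner (g t) (u t - x t k))))
    \<and>
    (\<forall>(x :: nat \<Rightarrow> nat \<Rightarrow> real^'n) (u :: nat \<Rightarrow> real^'n) (v :: nat \<Rightarrow> real^'n).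
       (\<forall>t. (\<forall>j. 1 \<le> j \<and> j < \<nu> \<longrightarrow> x (Suc t) j = x t (Suc j)) \<and> x (Suc t) \<nu> = v t
            \<and> v t \<in> subdiff f (u t)
            \<and> (\<forall>j\<in>{1..\<nu>}. x t j \<in> subdiff_range f)) \<longrightarrow>
       (\<forall>t1 t2. t1 \<le> t2 \<longrightarrow>
          (\<Sum>j=k..\<nu>. fconj f (x t2 j)) \<le> (\<Sum>j=k..\<nu>. fconj f (x t1 j)) + (\<Sum>t=t1..<t2. inner (u t) (v t - x t k))))"
proof (intro conjI allI impI)
  fix x :: "nat \<Rightarrow> nat \<Rightarrow> real^'n" and u g :: "nat \<Rightarrow> real^'n" and t1 t2 :: nat
  assume dyn: "\<forall>t. (\<forall>j. 1 \<le> j \<and> j < \<nu> \<longrightarrow> x (Suc t) j = x t (Suc j)) \<and> x (Suc t) \<nu> = u t"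
    and sub: "t1 \<le> t2 \<and> (\<forall>t\<in>{t1..<t2}. g t \<in> subdiff f (u t))"
  show "(\<Sum>j=k..\<nu>. f (x t2 j)) \<le> (\<Sum>j=k..\<nu>. f (x t1 j)) + (\<Sum>t=t1..<t2. inner (g t) (u t - x t k))"
  proof (rule telescoping_upper_bound)
    fix t
    assume "t1 \<le> t" "t < t2"
    then have "g t \<in> subdiff f (u t)"
      using sub by simp
    then have "f (x (Suc t) \<nu>) \<le> f (x t k) + inner (g t) (u t - x t k)"
      using dyn by (simp add: subdiff_storage_step)
    then show "(\<Sum>j=k..\<nu>. f (x (Suc t) j)) \<le> (\<Sum>j=k..\<nu>. f (x t j)) + inner (g t) (u t - x t k)"
      using k dyn by (intro shift_register_storage_step) auto
  qed (use sub in simp)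
next
  fix x :: "nat \<Rightarrow> nat \<Rightarrow> real^'n" and u v :: "nat \<Rightarrow> real^'n" and t1 t2 :: nat
  assume dyn: "\<forall>t. (\<forall>j. 1 \<le> j \<and> j < \<nu> \<longrightarrow> x (Suc t) j = x t (Suc j)) \<and> x (Suc t) \<nu> = v t
            \<and> v t \<in> subdiff f (u t)
            \<and> (\<forall>j\<in>{1..\<nu>}. x t j \<in> subdiff_range f)"
    and "t1 \<le> t2"
  then show "(\<Sum>j=k..\<nu>. fconj f (x t2 j)) \<le> (\<Sum>j=k..\<nu>. fconj f (x t1 j)) + (\<Sum>t=t1..<t2. inner (u t) (v t - x t k))"
  proof (intro telescoping_upper_bound)
    fix t
    have "v t \<in> subdiff f (u t)" "x t k \<in> subdiff_range f"
      using k dyn by auto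
    then have "fconj f (x (Suc t) \<nu>) \<le> fconj f (x t k) + inner (u t) (v t - x t k)"
      using dyn by (simp add: fconj_storage_step)
    then show "(\<Sum>j=k..\<nu>. fconj f (x (Suc t) j)) \<le> (\<Sum>j=k..\<nu>. fconj f (x t j)) + inner (u t) (v t - x t k)"
      using k dyn by (intro shift_register_storage_step) auto
  qed
qed

end
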